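(* Let $(X,d)$ be a metric space and $T:X\to X$ a mapping for which there is $\lambda\in[0,1)$ with $d(Tx,Ty)\le\lambda\,d(x,y)$ for all $x,y\in X$. Then there exist an integer $p\ge 1$ and a constant $\alpha\in[0,\tfrac12)$ such that \[ d(T^p x,T^p y)\le \alpha\big(d(x,T^p y)+d(y,T^p x)\big)\quad\text{for all } x,y\in X. \]
   Context: $T^p$ denotes the $p$-fold composition of $T$ with itself. *)

theory Defs
  imports "HOL-Analysis.Analysis"
begin

end

theory Submission
  imports Defs
begin

text \<open>The iterate \<open>T\<^sup>p\<close> of a \<open>\<lambda>\<close>-contraction is a \<open>\<lambda>\<^sup>p\<close>-contraction, and \<open>\<lambda>\<^sup>p < 1/3\<close> for large \<open>p\<close>.
  A \<open>k\<close>-contraction \<open>S\<close> satisfies the Chatterjea condition with constant \<open>k/(1-k)\<close>, because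
  \<open>d(x,y) \<le> d(x,Sy) + d(Sy,Sx) + d(Sx,y)\<close> gives
  \<open>d(Sx,Sy) \<le> k(d(x,Sy) + d(y,Sx)) + k d(Sx,Sy)\<close>; and \<open>k/(1-k) < 1/2\<close> exactly when \<open>k < 1/3\<close>.\<close>

lemma dist_funpow_le:
  fixes T :: "'a::metric_space \<Rightarrow> 'a" and l :: real
  assumes "0 \<le> l" and "\<forall>x y. dist (T x) (T y) \<le> l * dist x y"
  shows "dist ((T ^^ n) x) ((T ^^ n) y) \<le> l ^ n * dist x y"
proof (induction n)
  case 0
  then show ?case by simp
next
  case (Suc n)
  have "dist ((T ^^ Suc n) x) ((T ^^ Suc n) y) \<le> l * dist ((T ^^ n) x) ((T ^^ n) y)"
    using assms(2) by simp
  also have "\<dots> \<le> l * (l ^ n * dist x y)"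
    using Suc assms(1) by (simp add: mult_left_mono)
  finally show ?case by simp
qed

lemma dist_le_chatterjea_if_contraction:
  fixes S :: "'a::metric_space \<Rightarrow> 'a" and k :: real
  assumes "0 \<le> k" and "k < 1" and contr: "dist (S x) (S y) \<le> k * dist x y"
  shows "dist (S x) (S y) \<le> k / (1 - k) * (dist x (S y) + dist y (S x))"
proof -
  have "dist x y \<le> dist x (S y) + dist (S x) (S y) + dist y (S x)"
    using dist_triangle[of x y "S y"] dist_triangle[of "S y" y "S x"]
    by (simp add: dist_commute)
  from mult_left_mono[OF this assms(1)] contr
  have "dist (S x) (S y) \<le> k * (dist x (S y) + dist y (S x)) + k * dist (S x) (S y)"
    by (simp add: algebra_simps)
  then have "(1 - k) * dist (S x) (S y) \<le> k * (dist x (S y) + dist y (S x))"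
    by (simp add: algebra_simps)
  with assms(2) show ?thesis
    by (simp add: field_simps)
qed

theorem mainTheorem3:
  fixes T :: "'a::metric_space \<Rightarrow> 'a" and l :: real
  assumes "0 \<le> l" and "l < 1"
    and "\<forall>x y. dist (T x) (T y) \<le> l * dist x y"
  shows "\<exists>p::nat. p \<ge> 1 \<and> (\<exists>\<alpha>::real. 0 \<le> \<alpha> \<and> \<alpha> < 1/2 \<and>
           (\<forall>x y. dist ((T ^^ p) x) ((T ^^ p) y)
                   \<le> \<alpha> * (dist x ((T ^^ p) y) + dist y ((T ^^ p) x))))"
proof -
  obtain p where small: "l ^ p < 1/3"
    using real_arch_pow_inv[of "1/3" l] assms(2) by auto
  then have "p \<ge> 1"
    by (cases p) auto
  define k where "k = l ^ p"
  have k: "0 \<le> k" "k < 1/3"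
    using assms(1) small by (simp_all add: k_def)
  have "dist ((T ^^ p) x) ((T ^^ p) y) \<le> k / (1 - k) * (dist x ((T ^^ p) y) + dist y ((T ^^ p) x))"
    for x y
    using k dist_funpow_le[OF assms(1,3)]
    by (intro dist_le_chatterjea_if_contraction) (auto simp: k_def)
  moreover have "0 \<le> k / (1 - k)" and "k / (1 - k) < 1/2"
    using k by (simp_all add: field_simps)
  ultimately show ?thesis
    using \<open>p \<ge> 1\<close> by blast
qed

end
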